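(* Let $d = 2$ and assume $\varphi$ is twice continuously differentiable. For $X \in \mathcal{M}$, the eigenvalues of the Riemannian Hessian of $f$ at $X$ (a self-adjoint operator on the $n$-dimensional space $\mathrm{T}_X\mathcal{M}$) are equal to the eigenvalues of $-L(M)$, where $M$ has entries $m_{ij} = w_{ij}\, h(x_i^\top x_j)$ with $h(t) = t\varphi'(t) - (1-t^2)\varphi''(t)$. Moreover, $X$ is a critical point of $f$ with negative semidefinite Riemannian Hessian if and only if $$X\,\mathrm{ddiag}(X^\top X A) = XA \quad\text{and}\quad \mathrm{ddiag}(X^\top X A) - A \odot X^\top X \succeq L(K),$$ where $A = W \odot \varphi'(X^\top X)$ and $K = W \odot \varphi''(X^\top X) \odot \big(\mathbf{1}\mathbf{1}^\top - (X^\top X)^{\odot 2}\big)$.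
   Context: $\mathcal{M} = (\mathbb{S}^{1})^n = \{X\in\mathbb{R}^{2\times n} : \text{columns } x_i \text{ unit norm}\}$, a Riemannian submanifold of $\mathbb{R}^{2\times n}$ with the Frobenius metric. $W$ is symmetric with nonnegative entries, $f(X) = \frac12\sum_{i,j} w_{ij}\varphi(x_i^\top x_j)$; $\varphi,\varphi',\varphi''$ act entrywise on matrices. For a symmetric $M \in \mathbb{R}^{n\times n}$, $L(M) = \mathrm{diag}(M\mathbf{1}) - M$ (graph Laplacian), where $\mathrm{diag}(v)$ is the diagonal matrix with diagonal $v$ and $\mathbf{1}$ is the all-ones vector. $\odot$ is the entrywise product, $(\cdot)^{\odot 2}$ entrywise squaring, $\mathrm{ddiag}$ zeroes off-diagonal entries, $\succeq$ is the Loewner order. *)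

theory Defs
  imports "HOL-Analysis.Analysis"
begin

text \<open>Matrices are HOL-Analysis matrices: X :: real^'n^2 is a 2 x n matrix
  (rows indexed by the type 2, columns by 'n); W :: real^'n^'n.\<close>

definition hadamard :: "real^'n^'m \<Rightarrow> real^'n^'m \<Rightarrow> real^'n^'m" where
  "hadamard A B = (\<chi> i j. A$i$j * B$i$j)"

definition entrywise :: "(real \<Rightarrow> real) \<Rightarrow> real^'n^'m \<Rightarrow> real^'n^'m" where
  "entrywise g A = (\<chi> i j. g (A$i$j))"

definition diag_mat :: "real^'n \<Rightarrow> real^'n^'n" where
  "diag_mat v = (\<chi> i j. if i = j then v$i else 0)"

definition ddiag :: "real^'n^'n \<Rightarrow> real^'n^'n" where
  "ddiag A = (\<chi> i j. if i = j then A$i$j else 0)"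

definition laplacian :: "real^'n^'n \<Rightarrow> real^'n^'n" where
  "laplacian M = diag_mat (M *v vec 1) - M"

definition psd :: "real^'n^'n \<Rightarrow> bool" where
  "psd P \<longleftrightarrow> (\<forall>v. 0 \<le> v \<bullet> (P *v v))"

definition loewner_ge :: "real^'n^'n \<Rightarrow> real^'n^'n \<Rightarrow> bool" where
  "loewner_ge P Q \<longleftrightarrow> psd (P - Q)"

definition circ_manifold :: "(real^'n^2) set" where
  "circ_manifold = {X. \<forall>i. norm (column i X) = 1}"

definition tangent_space :: "real^'n^2 \<Rightarrow> (real^'n^2) set" where
  "tangent_space X = {U. \<forall>i. column i X \<bullet> column i U = 0}"

text \<open>Orthogonal projection onto the tangent space at X (for X on the manifold),
  extended smoothly to all X: Proj_X(Z) = Z - X ddiag(X^T Z).\<close>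
definition proj :: "real^'n^2 \<Rightarrow> real^'n^2 \<Rightarrow> real^'n^2" where
  "proj X Z = Z - X ** ddiag (transpose X ** Z)"

text \<open>The cost, naturally extended to all of R^(2 x n).\<close>
definition fbar :: "real^'n^'n \<Rightarrow> (real \<Rightarrow> real) \<Rightarrow> real^'n^2 \<Rightarrow> real" where
  "fbar W \<phi> X = (1/2) * (\<Sum>i\<in>UNIV. \<Sum>j\<in>UNIV. W$i$j * \<phi> (column i X \<bullet> column j X))"

definition egrad :: "(real^'n^2 \<Rightarrow> real) \<Rightarrow> real^'n^2 \<Rightarrow> real^'n^2" where
  "egrad F X = (SOME G. (F has_derivative (\<lambda>H. G \<bullet> H)) (at X))"

definition rgrad :: "(real^'n^2 \<Rightarrow> real) \<Rightarrow> real^'n^2 \<Rightarrow> real^'n^2" where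
  "rgrad F X = proj X (egrad F X)"

text \<open>Riemannian Hessian of a Riemannian submanifold of a Euclidean space:
  Hess f(X)[U] = Proj_X (D Gbar(X)[U]) with Gbar the smooth extension
  Y \<mapsto> Proj_Y(egrad Y) of the Riemannian gradient.\<close>
definition rhess :: "(real^'n^2 \<Rightarrow> real) \<Rightarrow> real^'n^2 \<Rightarrow> real^'n^2 \<Rightarrow> real^'n^2" where
  "rhess F X U = proj X ((SOME D. ((\<lambda>Y. rgrad F Y) has_derivative D) (at X)) U)"

end

theory Submission
  imports Defs
begin

text \<open>For d = 2 every tangent vector at X has the form U = R(X) diag(\<theta>), where R
  rotates each column of X by a quarter turn; \<theta> \<mapsto> U is a linear isometry of R^n onto
  the tangent space. Differentiating the Riemannian gradient column by column and projecting,
  the Hessian acts on \<theta> as -L(M): in the (i,l) term the second derivative of \<phi> is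
  weighted by the squared sine 1 - t^2 of the angle between x_i and x_l. So the Hessian is
  conjugate to -L(M), which gives the spectra. The Riemannian gradient is
  X A - X ddiag(X^T X A), and ddiag(X^T X A) - A \<odot> X^T X - L(K) = L(M), so the Loewner
  condition says exactly that -L(M) is negative semidefinite.\<close>

lemma has_derivative_vec_lambda:
  fixes f :: "'a::real_normed_vector \<Rightarrow> 'b::real_inner^'m"
  assumes "\<And>i. ((\<lambda>x. f x $ i) has_derivative (\<lambda>h. f' h $ i)) F"
  shows "(f has_derivative f') F"
proof -
  have axis_bl: "bounded_linear (axis i :: 'b \<Rightarrow> 'b^'m)" for i
  proof (rule bounded_linear_intro[where K=1])
    show "norm (axis i x) \<le> norm x * 1" for x :: 'b
      by (simp add: norm_eq_sqrt_inner inner_axis_axis)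
  qed (auto simp: axis_def vec_eq_iff)
  have "((\<lambda>x. \<Sum>i\<in>UNIV. axis i (f x $ i)) has_derivative (\<lambda>h. \<Sum>i\<in>UNIV. axis i (f' h $ i))) F"
    by (intro has_derivative_sum bounded_linear.has_derivative[OF axis_bl] assms)
  moreover have "(\<Sum>i\<in>UNIV. axis i (x $ i)) = x" for x :: "'b^'m"
    by (simp add: vec_eq_iff sum_component axis_def if_distrib cong: if_cong)
  ultimately show ?thesis by simp
qed

lemma has_derivative_matrix_entry [derivative_intros]:
  "((\<lambda>Y::real^'n^'m. Y $ k $ i) has_derivative (\<lambda>H. H $ k $ i)) F"
  by (intro bounded_linear_imp_has_derivative bounded_linear_compose[OF bounded_linear_vec_nth]
      bounded_linear_vec_nth)

lemma has_derivative_column [derivative_intros]: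
  "((\<lambda>Y::real^'n^'m. column i Y) has_derivative column i) F"
  by (rule has_derivative_vec_lambda) (simp add: column_def has_derivative_matrix_entry)

lemma egrad_eqI:
  fixes F :: "real^'n^2 \<Rightarrow> real"
  assumes "(F has_derivative (\<lambda>H. G \<bullet> H)) (at X)"
  shows "egrad F X = G"
  unfolding egrad_def
proof (rule some_equality)
  fix G' assume "(F has_derivative (\<lambda>H. G' \<bullet> H)) (at X)"
  then have "(\<lambda>H. G' \<bullet> H) = (\<lambda>H. G \<bullet> H)"
    using assms by (rule has_derivative_unique)
  then have "(G' - G) \<bullet> (G' - G) = 0"
    by (metis inner_diff_left right_minus_eq)
  then show "G' = G" by simp
qed (rule assms)

lemma rhess_eqI:
  fixes F :: "real^'n^2 \<Rightarrow> real"
  assumes "(rgrad F has_derivative D) (at X)"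
  shows "rhess F X U = proj X (D U)"
proof -
  have "(SOME D. (rgrad F has_derivative D) (at X)) = D"
    using assms has_derivative_unique by blast
  then show ?thesis by (simp add: rhess_def)
qed

definition gram :: "real^'n^'m \<Rightarrow> 'n \<Rightarrow> 'n \<Rightarrow> real" where
  "gram Y i j = column i Y \<bullet> column j Y"

lemma gram_sym: "gram Y i j = gram Y j i"
  by (simp add: gram_def inner_commute)

lemma gram_eq_sum: "gram Y i j = (\<Sum>k\<in>UNIV. Y$k$i * Y$k$j)"
  by (simp add: gram_def column_def inner_vec_def)

lemma gram_matrix_entry: "(transpose Y ** Y) $ i $ j = gram Y i j"
  by (simp add: gram_eq_sum transpose_def matrix_matrix_mult_def)

lemma has_derivative_gram [derivative_intros]:
  "((\<lambda>Y. gram Y i j) has_derivative (\<lambda>H. column i H \<bullet> column j Y + column i Y \<bullet> column j H)) (at Y)"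
  unfolding gram_def by (auto intro!: derivative_eq_intros)

lemma column_matrix_mult: "column i (Y ** A) = (\<Sum>l\<in>UNIV. A$l$i *\<^sub>R column l Y)"
  by (simp add: vec_eq_iff column_def matrix_matrix_mult_def sum_component mult.commute)

lemma inner_matrix_mult_left:
  fixes Y H :: "real^'n^'m" and A :: "real^'n^'n"
  shows "(Y ** A) \<bullet> H = (\<Sum>i\<in>UNIV. \<Sum>l\<in>UNIV. A$l$i * (column l Y \<bullet> column i H))"
proof -
  have "(Y ** A) \<bullet> H = (\<Sum>i\<in>UNIV. column i (Y ** A) \<bullet> column i H)"
    by (simp add: inner_vec_def column_def sum.swap[of _ "UNIV::'m set"])
  then show ?thesis
    by (simp add: column_matrix_mult inner_sum_left)
qed

lemma proj_entry: "proj Y Z $ k $ i = Z$k$i - Y$k$i * (column i Y \<bullet> column i Z)"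
  by (simp add: proj_def ddiag_def matrix_matrix_mult_def transpose_def column_def inner_vec_def
      if_distrib cong: if_cong)

lemma proj_sum_entry:
  fixes X :: "real^'n^2"
  shows "proj X (\<chi> k i. \<Sum>l\<in>UNIV. f k i l) $ k $ i
    = (\<Sum>l\<in>UNIV. f k i l - X$k$i * (X$1$i * f 1 i l + X$2$i * f 2 i l))"
  by (simp add: proj_entry column_def inner_vec_def sum_2 sum_subtractf sum.distrib
      sum_distrib_left ring_distribs)

lemma symmetric_entry: "transpose W = W \<Longrightarrow> W$j$i = W$i$j"
  by (metis transpose_def vec_lambda_beta)

lemma has_derivative_fbar:
  fixes W :: "real^'n^'n" and Y :: "real^'n^2"
  assumes sym: "transpose W = W" and d\<phi>: "\<forall>t. (\<phi> has_real_derivative \<phi>' t) (at t)"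
  shows "(fbar W \<phi> has_derivative
           (\<lambda>H. (Y ** hadamard W (entrywise \<phi>' (transpose Y ** Y))) \<bullet> H)) (at Y)"
proof -
  define a where "a i j = W$i$j * \<phi>' (gram Y i j)" for i j
  have a_sym: "a i j = a j i" for i j
    unfolding a_def using symmetric_entry[OF sym] gram_sym by metis
  have "fbar W \<phi> = (\<lambda>Y. 1/2 * (\<Sum>i\<in>UNIV. \<Sum>j\<in>UNIV. W$i$j * \<phi> (gram Y i j)))"
    by (simp add: fun_eq_iff fbar_def gram_def)
  moreover have "((\<lambda>Y. 1/2 * (\<Sum>i\<in>UNIV. \<Sum>j\<in>UNIV. W$i$j * \<phi> (gram Y i j))) has_derivative
      (\<lambda>H. 1/2 * (\<Sum>i\<in>UNIV. \<Sum>j\<in>UNIV. a i j * (column i H \<bullet> column j Y + column i Y \<bullet> column j H))))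
      (at Y)"
    unfolding a_def
    by (auto intro!: derivative_eq_intros DERIV_compose_FDERIV[OF d\<phi>[rule_format]]
        simp: algebra_simps)
  moreover have "1/2 * (\<Sum>i\<in>UNIV. \<Sum>j\<in>UNIV. a i j * (column i H \<bullet> column j Y + column i Y \<bullet> column j H))
      = (Y ** hadamard W (entrywise \<phi>' (transpose Y ** Y))) \<bullet> H" for H
  proof -
    have "(\<Sum>i\<in>UNIV. \<Sum>j\<in>UNIV. a i j * (column i Y \<bullet> column j H))
        = (\<Sum>i\<in>UNIV. \<Sum>j\<in>UNIV. a i j * (column i H \<bullet> column j Y))"
      by (subst sum.swap) (simp add: a_sym inner_commute)
    then have "1/2 * (\<Sum>i\<in>UNIV. \<Sum>j\<in>UNIV. a i j * (column i H \<bullet> column j Y + column i Y \<bullet> column j H))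
        = (\<Sum>i\<in>UNIV. \<Sum>j\<in>UNIV. a j i * (column j Y \<bullet> column i H))"
      by (simp add: distrib_left sum.distrib a_sym inner_commute)
    also have "\<dots> = (Y ** hadamard W (entrywise \<phi>' (transpose Y ** Y))) \<bullet> H"
      by (simp add: inner_matrix_mult_left hadamard_def entrywise_def gram_matrix_entry a_def)
    finally show ?thesis .
  qed
  ultimately show ?thesis by simp
qed

lemma egrad_fbar:
  fixes W :: "real^'n^'n"
  assumes "transpose W = W" and "\<forall>t. (\<phi> has_real_derivative \<phi>' t) (at t)"
  shows "egrad (fbar W \<phi>) Y = Y ** hadamard W (entrywise \<phi>' (transpose Y ** Y))"
  by (rule egrad_eqI[OF has_derivative_fbar[OF assms]])

lemma rgrad_fbar_entry:
  fixes W :: "real^'n^'n"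
  assumes "transpose W = W" and "\<forall>t. (\<phi> has_real_derivative \<phi>' t) (at t)"
  shows "rgrad (fbar W \<phi>) Y $ k $ i
    = (\<Sum>l\<in>UNIV. W$l$i * \<phi>' (gram Y l i) * (Y$k$l - gram Y l i * Y$k$i))"
  by (simp add: rgrad_def egrad_fbar[OF assms] proj_entry column_matrix_mult inner_sum_right
      hadamard_def entrywise_def gram_matrix_entry sum_subtractf sum_distrib_left gram_sym[of Y i]
      algebra_simps flip: gram_def)
     (simp add: matrix_matrix_mult_def mult_ac)

lemma has_derivative_rgrad_fbar:
  fixes W :: "real^'n^'n"
  assumes sym: "transpose W = W" and d\<phi>: "\<forall>t. (\<phi> has_real_derivative \<phi>' t) (at t)"
    and d\<phi>': "\<forall>t. (\<phi>' has_real_derivative \<phi>'' t) (at t)"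
  shows "(rgrad (fbar W \<phi>) has_derivative (\<lambda>H. \<chi> k i. \<Sum>l\<in>UNIV. W$l$i *
      (\<phi>'' (gram Y l i) * (column l H \<bullet> column i Y + column l Y \<bullet> column i H)
         * (Y$k$l - gram Y l i * Y$k$i)
       + \<phi>' (gram Y l i) * (H$k$l - ((column l H \<bullet> column i Y + column l Y \<bullet> column i H) * Y$k$i
                                    + gram Y l i * H$k$i))))) (at Y)"
proof -
  have "rgrad (fbar W \<phi>) = (\<lambda>Y. \<chi> k i. \<Sum>l\<in>UNIV. W$l$i * \<phi>' (gram Y l i) * (Y$k$l - gram Y l i * Y$k$i))"
    by (simp add: fun_eq_iff vec_eq_iff rgrad_fbar_entry[OF sym d\<phi>])
  then show ?thesis
    by (auto intro!: has_derivative_vec_lambda derivative_eq_intros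
        DERIV_compose_FDERIV[OF d\<phi>'[rule_format]] simp: algebra_simps)
qed

definition rot90 :: "real^'n^2 \<Rightarrow> real^'n^2" where
  "rot90 X = (\<chi> k i. if k = 1 then - X$2$i else X$1$i)"

definition tangent_param :: "real^'n^2 \<Rightarrow> real^'n \<Rightarrow> real^'n^2" where
  "tangent_param X \<theta> = (\<chi> k i. \<theta>$i * rot90 X $ k $ i)"

lemma rot90_entry [simp]:
  "rot90 X $ 1 $ i = - X$2$i"
  "rot90 X $ 2 $ i = X$1$i"
  by (simp_all add: rot90_def)

lemma tangent_param_entry [simp]:
  "tangent_param X \<theta> $ 1 $ i = - \<theta>$i * X$2$i"
  "tangent_param X \<theta> $ 2 $ i = \<theta>$i * X$1$i"
  by (simp_all add: tangent_param_def)

lemma circ_manifold_unit_column: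
  "X \<in> circ_manifold \<Longrightarrow> X$1$i * X$1$i + X$2$i * X$2$i = 1"
  by (simp add: circ_manifold_def norm_eq_1 column_def inner_vec_def sum_2)

lemma tangent_space_entry:
  "U \<in> tangent_space X \<longleftrightarrow> (\<forall>i. X$1$i * U$1$i + X$2$i * U$2$i = 0)"
  by (simp add: tangent_space_def column_def inner_vec_def sum_2)

lemma linear_tangent_param: "linear (tangent_param X)"
  by (rule linearI) (simp_all add: tangent_param_def vec_eq_iff algebra_simps)

lemma tangent_param_in_tangent_space: "tangent_param X \<theta> \<in> tangent_space X"
  by (simp add: tangent_space_entry algebra_simps)

lemma inner_tangent_param:
  assumes "X \<in> circ_manifold"
  shows "tangent_param X u \<bullet> tangent_param X v = u \<bullet> v"
proof -
  have "tangent_param X u \<bullet> tangent_param X v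
      = (\<Sum>i\<in>UNIV. u$i * v$i * (X$1$i * X$1$i + X$2$i * X$2$i))"
    by (simp add: inner_vec_def sum_2 sum.distrib[symmetric] algebra_simps)
  then show ?thesis
    by (simp add: circ_manifold_unit_column[OF assms] inner_vec_def)
qed

lemma inj_tangent_param:
  assumes "X \<in> circ_manifold"
  shows "inj (tangent_param X)"
proof (rule injI)
  fix u v assume "tangent_param X u = tangent_param X v"
  then have "tangent_param X (u - v) = 0"
    by (simp add: linear_diff[OF linear_tangent_param])
  then have "(u - v) \<bullet> (u - v) = 0"
    by (metis inner_tangent_param[OF assms] inner_zero_left)
  then show "u = v" by simp
qed

lemma tangent_space_eq_range:
  assumes "X \<in> circ_manifold"
  shows "tangent_space X = range (tangent_param X)"
proof (intro equalityI subsetI)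
  fix U assume "U \<in> tangent_space X"
  then have orth: "X$1$i * U$1$i + X$2$i * U$2$i = 0" for i
    by (simp add: tangent_space_entry)
  \<comment> \<open>\<theta>_i is the component of u_i along the rotated column i of X\<close>
  have "U = tangent_param X (\<chi> i. X$1$i * U$2$i - X$2$i * U$1$i)"
  proof -
    have "U$k$i = tangent_param X (\<chi> i. X$1$i * U$2$i - X$2$i * U$1$i) $ k $ i" for k i
    proof -
      have unit: "X$1$i * X$1$i + X$2$i * X$2$i = 1"
        by (rule circ_manifold_unit_column[OF assms])
      have "U$1$i = U$1$i * (X$1$i * X$1$i + X$2$i * X$2$i) - X$1$i * (X$1$i * U$1$i + X$2$i * U$2$i)"
           "U$2$i = U$2$i * (X$1$i * X$1$i + X$2$i * X$2$i) - X$2$i * (X$1$i * U$1$i + X$2$i * U$2$i)"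
        by (simp_all only: unit orth)
      then show ?thesis
        using exhaust_2[of k] by (auto simp: algebra_simps)
    qed
    then show ?thesis unfolding vec_eq_iff by blast
  qed
  then show "U \<in> range (tangent_param X)" by blast
qed (use tangent_param_in_tangent_space in blast)

text \<open>The (i,l) summand of the projected Hessian at a tangent vector, for the unit columns
  x_i = (a,b), x_l = (c,d) with t = x_l \<bullet> x_i and tangent coordinates \<theta>_l = r, \<theta>_i = s;
  p and p' stand for \<phi>' t and \<phi>'' t, and dt is the derivative of t.\<close>
lemma circle_hessian_identity:
  fixes a b c d t r s w p p' :: real
  assumes "a * a + b * b = 1" and "c * c + d * d = 1"
    and "t = c * a + d * b"
  defines "dt \<equiv> (- r * d) * a + (r * c) * b + (c * (- s * b) + d * (s * a))"
  defines "z1 \<equiv> w * (p' * dt * (c - t * a) + p * (- r * d - (dt * a + t * (- s * b))))"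
      and "z2 \<equiv> w * (p' * dt * (d - t * b) + p * (r * c - (dt * b + t * (s * a))))"
  shows "z1 - a * (a * z1 + b * z2) = w * (t * p - (1 - t^2) * p') * (r - s) * - b"
    and "z2 - b * (a * z1 + b * z2) = w * (t * p - (1 - t^2) * p') * (r - s) * a"
  using assms(1-3) unfolding z1_def z2_def dt_def by algebra+

lemma diag_mat_mult_entry: "(diag_mat u *v v) $ i = u$i * (v$i :: real)"
  by (simp add: diag_mat_def matrix_vector_mult_def if_distrib if_distribR cong: if_cong)

lemma neg_laplacian_mult_entry:
  "(- laplacian M *v v) $ i = (\<Sum>l\<in>UNIV. M$i$l * (v$l - v$i))"
proof -
  have lap: "(- laplacian M *v v) $ i = (M *v v)$i - (M *v vec 1)$i * v$i"
    by (simp add: laplacian_def matrix_vector_mult_diff_rdistrib diag_mat_mult_entry)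
  show ?thesis
    unfolding lap by (simp add: matrix_vector_mult_def sum_distrib_left sum_subtractf algebra_simps)
qed

lemma rhess_fbar_tangent_param:
  fixes W :: "real^'n^'n"
  assumes sym: "transpose W = W" and d\<phi>: "\<forall>t. (\<phi> has_real_derivative \<phi>' t) (at t)"
    and d\<phi>': "\<forall>t. (\<phi>' has_real_derivative \<phi>'' t) (at t)"
    and X: "X \<in> circ_manifold"
  shows "rhess (fbar W \<phi>) X (tangent_param X \<theta>)
    = tangent_param X (- laplacian (hadamard W (entrywise (\<lambda>t. t * \<phi>' t - (1 - t^2) * \<phi>'' t)
                                                          (transpose X ** X))) *v \<theta>)"
proof -
  define U where "U = tangent_param X \<theta>"
  have "rhess (fbar W \<phi>) X U $ k $ i
    = tangent_param X (- laplacian (hadamard W (entrywise (\<lambda>t. t * \<phi>' t - (1 - t^2) * \<phi>'' t)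
                                                          (transpose X ** X))) *v \<theta>) $ k $ i" for k i
  proof -
    have rhs: "tangent_param X (- laplacian (hadamard W (entrywise (\<lambda>t. t * \<phi>' t - (1 - t^2) * \<phi>'' t)
                                                          (transpose X ** X))) *v \<theta>) $ k $ i
      = (\<Sum>l\<in>UNIV. W$l$i * (gram X l i * \<phi>' (gram X l i) - (1 - (gram X l i)^2) * \<phi>'' (gram X l i))
                     * (\<theta>$l - \<theta>$i) * rot90 X $ k $ i)"
      by (simp add: tangent_param_def neg_laplacian_mult_entry sum_distrib_right hadamard_def
          entrywise_def gram_matrix_entry symmetric_entry[OF sym, of i] gram_sym[of X i])
    have unit_i: "X$1$i * X$1$i + X$2$i * X$2$i = 1" and unit_l: "X$1$l * X$1$l + X$2$l * X$2$l = 1" for l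
      using circ_manifold_unit_column[OF X] by auto
    have gram_li: "gram X l i = X$1$l * X$1$i + X$2$l * X$2$i" for l
      by (simp add: gram_eq_sum sum_2)
    show ?thesis
      unfolding rhess_eqI[OF has_derivative_rgrad_fbar[OF sym d\<phi> d\<phi>']] proj_sum_entry rhs
    proof (rule sum.cong[OF refl], goal_cases)
      case (1 l)
      note identity = circle_hessian_identity[where r = "\<theta>$l" and s = "\<theta>$i" and w = "W$l$i"
          and p = "\<phi>' (gram X l i)" and p' = "\<phi>'' (gram X l i)", OF unit_i unit_l gram_li]
      consider "k = 1" | "k = 2" using exhaust_2 by blast
      then show ?case
      proof cases
        case 1
        show ?thesis
          unfolding 1 U_def
          by (simp only: tangent_param_entry rot90_entry column_def inner_vec_def sum_2
              vec_lambda_beta inner_real_def identity(1))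
      next
        case 2
        show ?thesis
          unfolding 2 U_def
          by (simp only: tangent_param_entry rot90_entry column_def inner_vec_def sum_2
              vec_lambda_beta inner_real_def identity(2))
      qed
    qed
  qed
  then show ?thesis unfolding U_def vec_eq_iff by blast
qed

lemma dim_eigenspace_conj:
  fixes T :: "'a::euclidean_space \<Rightarrow> 'b::euclidean_space"
  assumes "linear T" and "inj T" and "\<And>v. H (T v) = T (B v)"
  shows "dim {U \<in> range T. H U = \<mu> *\<^sub>R U} = dim {v. B v = \<mu> *\<^sub>R v}"
proof -
  have "H (T v) = \<mu> *\<^sub>R T v \<longleftrightarrow> B v = \<mu> *\<^sub>R v" for v
    using assms by (metis injD linear_scale)
  then have "{U \<in> range T. H U = \<mu> *\<^sub>R U} = T ` {v. B v = \<mu> *\<^sub>R v}"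
    by blast
  moreover have "dim (T ` {v. B v = \<mu> *\<^sub>R v}) = dim {v. B v = \<mu> *\<^sub>R v}"
    by (rule dim_image_eq[OF assms(1)]) (meson assms(2) inj_on_subset subset_UNIV)
  ultimately show ?thesis by simp
qed

lemma rgrad_fbar:
  fixes W :: "real^'n^'n"
  assumes "transpose W = W" and "\<forall>t. (\<phi> has_real_derivative \<phi>' t) (at t)"
  shows "rgrad (fbar W \<phi>) X
    = X ** hadamard W (entrywise \<phi>' (transpose X ** X))
      - X ** ddiag (transpose X ** X ** hadamard W (entrywise \<phi>' (transpose X ** X)))"
  by (simp add: rgrad_def egrad_fbar[OF assms] proj_def matrix_mul_assoc)

lemma ddiag_minus_laplacian_eq_laplacian:
  fixes W :: "real^'n^'n" and X :: "real^'n^'m"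
  assumes sym: "transpose W = W"
  shows "ddiag (transpose X ** X ** hadamard W (entrywise \<phi>' (transpose X ** X)))
           - hadamard (hadamard W (entrywise \<phi>' (transpose X ** X))) (transpose X ** X)
         - laplacian (hadamard (hadamard W (entrywise \<phi>'' (transpose X ** X)))
                               (entrywise (\<lambda>t. 1 - t^2) (transpose X ** X)))
       = laplacian (hadamard W (entrywise (\<lambda>t. t * \<phi>' t - (1 - t^2) * \<phi>'' t) (transpose X ** X)))"
proof -
  have diag_entry: "(transpose X ** X ** hadamard W (entrywise \<phi>' (transpose X ** X))) $ i $ i
      = (\<Sum>l\<in>UNIV. W$i$l * \<phi>' (gram X i l) * gram X i l)" for i
  proof -
    have "(G ** A) $ i $ i = (\<Sum>l\<in>UNIV. G$i$l * A$l$i)" for G A :: "real^'n^'n"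
      by (simp add: matrix_matrix_mult_def)
    then show ?thesis
      by (simp add: hadamard_def entrywise_def gram_matrix_entry symmetric_entry[OF sym, of _ i]
          gram_sym[of X _ i] mult_ac)
  qed
  have diag: "ddiag (transpose X ** X ** hadamard W (entrywise \<phi>' (transpose X ** X))) $ i $ j
      = (if i = j then \<Sum>l\<in>UNIV. W$i$l * \<phi>' (gram X i l) * gram X i l else 0)" for i j
    by (simp add: ddiag_def diag_entry)
  have lap: "laplacian N $ i $ j = (if i = j then (\<Sum>l\<in>UNIV. N$i$l) else 0) - N$i$j"
    for N :: "real^'n^'n" and i j
    by (simp add: laplacian_def diag_mat_def matrix_vector_mult_def)
  show ?thesis
    unfolding vec_eq_iff vector_minus_component lap diag
    by (auto simp: hadamard_def entrywise_def gram_matrix_entry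
        sum_subtractf[symmetric] sum.distrib[symmetric] algebra_simps intro!: sum.cong)
qed

theorem mainTheorem10:
  fixes W :: "real^'n^'n" and \<phi> \<phi>' \<phi>'' :: "real \<Rightarrow> real" and X :: "real^'n^2"
  assumes "transpose W = W"
    and "\<forall>i j. 0 \<le> W$i$j"
    and "\<forall>t. (\<phi> has_real_derivative \<phi>' t) (at t)"
    and "\<forall>t. (\<phi>' has_real_derivative \<phi>'' t) (at t)"
    and "continuous_on UNIV \<phi>''"
    and "X \<in> circ_manifold"
  shows "(\<forall>\<mu>::real. dim {U \<in> tangent_space X. rhess (fbar W \<phi>) X U = \<mu> *\<^sub>R U}
             = dim {v :: real^'n.
                 (- laplacian (hadamard W (entrywise (\<lambda>t. t * \<phi>' t - (1 - t^2) * \<phi>'' t)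
                                            (transpose X ** X)))) *v v = \<mu> *\<^sub>R v})
     \<and> ((rgrad (fbar W \<phi>) X = 0 \<and>
          (\<forall>U\<in>tangent_space X. U \<bullet> rhess (fbar W \<phi>) X U \<le> 0))
        \<longleftrightarrow>
        (X ** ddiag (transpose X ** X ** hadamard W (entrywise \<phi>' (transpose X ** X)))
           = X ** hadamard W (entrywise \<phi>' (transpose X ** X))
         \<and> loewner_ge
             (ddiag (transpose X ** X ** hadamard W (entrywise \<phi>' (transpose X ** X)))
              - hadamard (hadamard W (entrywise \<phi>' (transpose X ** X))) (transpose X ** X))
             (laplacian (hadamard (hadamard W (entrywise \<phi>'' (transpose X ** X)))
                                  (entrywise (\<lambda>t. 1 - t^2) (transpose X ** X))))))"
proof -
  note sym = assms(1) and d\<phi> = assms(3) and d\<phi>' = assms(4) and X = assms(6)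
  define H where "H = - laplacian (hadamard W (entrywise (\<lambda>t. t * \<phi>' t - (1 - t^2) * \<phi>'' t)
                                                      (transpose X ** X)))"
  define A where "A = hadamard W (entrywise \<phi>' (transpose X ** X))"
  have hess: "rhess (fbar W \<phi>) X (tangent_param X v) = tangent_param X (H *v v)" for v
    unfolding H_def by (rule rhess_fbar_tangent_param[OF sym d\<phi> d\<phi>' X])
  note tangent = tangent_space_eq_range[OF X]
  have spectrum: "dim {U \<in> tangent_space X. rhess (fbar W \<phi>) X U = \<mu> *\<^sub>R U}
      = dim {v. H *v v = \<mu> *\<^sub>R v}" for \<mu>
    unfolding tangent
    by (rule dim_eigenspace_conj[where B = "\<lambda>v. H *v v",
          OF linear_tangent_param inj_tangent_param[OF X] hess])
  have critical: "rgrad (fbar W \<phi>) X = 0 \<longleftrightarrow> X ** ddiag (transpose X ** X ** A) = X ** A"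
    unfolding rgrad_fbar[OF sym d\<phi>] A_def by auto
  have second_order: "(\<forall>U\<in>tangent_space X. U \<bullet> rhess (fbar W \<phi>) X U \<le> 0)
      \<longleftrightarrow> (\<forall>v. v \<bullet> (H *v v) \<le> 0)"
    unfolding tangent by (simp add: hess inner_tangent_param[OF X])
  have loewner: "loewner_ge (ddiag (transpose X ** X ** A) - hadamard A (transpose X ** X))
        (laplacian (hadamard (hadamard W (entrywise \<phi>'' (transpose X ** X)))
                             (entrywise (\<lambda>t. 1 - t^2) (transpose X ** X))))
      \<longleftrightarrow> (\<forall>v. v \<bullet> (H *v v) \<le> 0)"
    unfolding loewner_ge_def A_def ddiag_minus_laplacian_eq_laplacian[OF sym] psd_def H_def
    by (simp add: matrix_vector_mult_diff_rdistrib[of 0, simplified])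
  show ?thesis
    using spectrum critical second_order loewner unfolding H_def A_def by blast
qed

end
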